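(* Let $\rho$ be a function quasi-norm over a $\sigma$-finite measure space $(\Omega,\Sigma,\mu)$ and let $f\in L_0^+(\mu)$ with $\rho(f)<\infty$. Then $f$ is dominating if and only if $\lim_n\rho(f\chi_{A_n})=0$ for every non-increasing sequence $(A_n)$ in $\Sigma$ with $\bigcap_nA_n=\emptyset$.
   Context: $L_0^+(\mu)$: measurable functions $\Omega\to[0,\infty]$ modulo a.e. equality. A function quasi-norm is $\rho\colon L_0^+(\mu)\to[0,\infty]$ with (F1) $\rho(tf)=t\rho(f)$, $t\ge0$; (F2) $f\le g$ a.e. $\Rightarrow\rho(f)\le\rho(g)$; (F3) $\rho(\chi_E)<\infty$ if $\mu(E)<\infty$; (F4) for all $E$ with $\mu(E)<\infty$ and $\varepsilon>0$ there is $\delta>0$ with $\mu(A)\le\varepsilon$ whenever $A\subseteq E$ measurable and $\rho(\chi_A)\le\delta$; (F5) $\rho(f+g)\le\kappa(\rho(f)+\rho(g))$. $f$ (with $\rho(f)<\infty$) is dominating if $\lim_n\rho(f_n)=0$ for every non-increasing sequence $(f_n)$ in $L_0^+(\mu)$ with $f_1\le f$ and $\lim_nf_n=0$. *)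

theory Defs
  imports "HOL-Analysis.Analysis"
begin

text \<open>Elements of L_0^+(mu) are represented by measurable functions into [0,infinity]
  (type ennreal); a function quasi-norm is a map on such functions that is
  invariant under a.e. equality (so it is well defined on classes).\<close>

definition function_quasi_norm ::
  "'a measure \<Rightarrow> (('a \<Rightarrow> ennreal) \<Rightarrow> ennreal) \<Rightarrow> bool" where
  "function_quasi_norm M \<rho> \<longleftrightarrow>
     \<comment> \<open>well defined modulo a.e. equality\<close>
     (\<forall>f g. f \<in> borel_measurable M \<longrightarrow> g \<in> borel_measurable M \<longrightarrow>
        (AE x in M. f x = g x) \<longrightarrow> \<rho> f = \<rho> g) \<and>
     \<comment> \<open>(F1)\<close>
     (\<forall>f (t::real). f \<in> borel_measurable M \<longrightarrow> t \<ge> 0 \<longrightarrow>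
        \<rho> (\<lambda>x. ennreal t * f x) = ennreal t * \<rho> f) \<and>
     \<comment> \<open>(F2)\<close>
     (\<forall>f g. f \<in> borel_measurable M \<longrightarrow> g \<in> borel_measurable M \<longrightarrow>
        (AE x in M. f x \<le> g x) \<longrightarrow> \<rho> f \<le> \<rho> g) \<and>
     \<comment> \<open>(F3)\<close>
     (\<forall>E \<in> sets M. emeasure M E < \<infinity> \<longrightarrow> \<rho> (indicator E) < \<infinity>) \<and>
     \<comment> \<open>(F4)\<close>
     (\<forall>E \<in> sets M. emeasure M E < \<infinity> \<longrightarrow>
        (\<forall>\<epsilon>::real. \<epsilon> > 0 \<longrightarrow> (\<exists>\<delta>::real. \<delta> > 0 \<and>
          (\<forall>A \<in> sets M. A \<subseteq> E \<longrightarrow> \<rho> (indicator A) \<le> ennreal \<delta> \<longrightarrow>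
              emeasure M A \<le> ennreal \<epsilon>)))) \<and>
     \<comment> \<open>(F5)\<close>
     (\<exists>\<kappa>::real. \<forall>f g. f \<in> borel_measurable M \<longrightarrow> g \<in> borel_measurable M \<longrightarrow>
        \<rho> (\<lambda>x. f x + g x) \<le> ennreal \<kappa> * (\<rho> f + \<rho> g))"

definition dominating ::
  "'a measure \<Rightarrow> (('a \<Rightarrow> ennreal) \<Rightarrow> ennreal) \<Rightarrow> ('a \<Rightarrow> ennreal) \<Rightarrow> bool" where
  "dominating M \<rho> f \<longleftrightarrow> \<rho> f < \<infinity> \<and>
     (\<forall>F :: nat \<Rightarrow> 'a \<Rightarrow> ennreal.
        (\<forall>n. F n \<in> borel_measurable M) \<longrightarrow>
        (\<forall>n. AE x in M. F (Suc n) x \<le> F n x) \<longrightarrow>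
        (AE x in M. F 0 x \<le> f x) \<longrightarrow>
        (AE x in M. (\<lambda>n. F n x) \<longlonglongrightarrow> 0) \<longrightarrow>
        (\<lambda>n. \<rho> (F n)) \<longlonglongrightarrow> 0)"

end

theory Submission
  imports Defs
begin

text \<open>
  Necessity is immediate, since \<open>f \<chi>\<^sub>A\<^sub>n\<close> decreases pointwise to \<open>0\<close>.
  For sufficiency let \<open>F\<^sub>n \<down> 0\<close> with \<open>F\<^sub>0 \<le> f\<close>, and let \<open>\<Omega>\<^sub>k \<up> \<Omega>\<close> have finite measure.
  For every level \<open>\<delta> > 0\<close>,
  \<open>F\<^sub>n \<le> \<delta> \<chi>\<^sub>\<Omega>\<^sub>k + f \<chi>\<^bsub>{F\<^sub>n > \<delta>}\<^esub> + f \<chi>\<^bsub>\<Omega> - \<Omega>\<^sub>k\<^esub>\<close>.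
  The last term is small for large \<open>k\<close> by hypothesis, the first one for small \<open>\<delta>\<close> by (F1) and (F3),
  and the middle one for large \<open>n\<close> by hypothesis again, because the superlevel sets
  \<open>{F\<^sub>n > \<delta>}\<close> decrease to the empty set; the quasi-triangle inequality (F5) combines the three.
  The almost-everywhere hypotheses are reduced to everywhere ones by cutting \<open>F\<^sub>n\<close> off on a
  null set, which does not change \<open>\<rho>\<close>.
\<close>

definition has_absolutely_continuous_norm ::
  "'a measure \<Rightarrow> (('a \<Rightarrow> ennreal) \<Rightarrow> ennreal) \<Rightarrow> ('a \<Rightarrow> ennreal) \<Rightarrow> bool" where
  "has_absolutely_continuous_norm M \<rho> f \<longleftrightarrow>
     (\<forall>A :: nat \<Rightarrow> 'a set. (\<forall>n. A n \<in> sets M) \<longrightarrow> decseq A \<longrightarrow> (\<Inter>n. A n) = {} \<longrightarrow>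
       (\<lambda>n. \<rho> (\<lambda>x. f x * indicator (A n) x)) \<longlonglongrightarrow> 0)"

lemma has_absolutely_continuous_normD:
  assumes "has_absolutely_continuous_norm M \<rho> f"
    and "\<And>n. A n \<in> sets M" "decseq A" "(\<Inter>n. A n) = {}"
  shows "(\<lambda>n. \<rho> (\<lambda>x. f x * indicator (A n) x)) \<longlonglongrightarrow> 0"
  using assms unfolding has_absolutely_continuous_norm_def by blast

lemma function_quasi_norm_AE_cong:
  assumes "function_quasi_norm M \<rho>" "f \<in> borel_measurable M" "g \<in> borel_measurable M"
    and "AE x in M. f x = g x"
  shows "\<rho> f = \<rho> g"
  using assms unfolding function_quasi_norm_def by meson

lemma function_quasi_norm_scale:
  assumes "function_quasi_norm M \<rho>" "f \<in> borel_measurable M" "t \<ge> 0"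
  shows "\<rho> (\<lambda>x. ennreal t * f x) = ennreal t * \<rho> f"
  using assms unfolding function_quasi_norm_def by meson

lemma function_quasi_norm_mono:
  assumes "function_quasi_norm M \<rho>" "f \<in> borel_measurable M" "g \<in> borel_measurable M"
    and "\<And>x. x \<in> space M \<Longrightarrow> f x \<le> g x"
  shows "\<rho> f \<le> \<rho> g"
proof -
  have "AE x in M. f x \<le> g x"
    using assms(4) by (rule AE_I2)
  with assms(1-3) show ?thesis
    unfolding function_quasi_norm_def by meson
qed

lemma function_quasi_norm_indicator_finite:
  assumes "function_quasi_norm M \<rho>" "E \<in> sets M" "emeasure M E < \<infinity>"
  shows "\<rho> (indicator E) < \<infinity>"
  using assms unfolding function_quasi_norm_def by meson

lemma function_quasi_norm_triangle:
  assumes "function_quasi_norm M \<rho>"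
  obtains K :: ennreal where "K < \<infinity>"
    and "\<And>f g. f \<in> borel_measurable M \<Longrightarrow> g \<in> borel_measurable M \<Longrightarrow>
           \<rho> (\<lambda>x. f x + g x) \<le> K * (\<rho> f + \<rho> g)"
proof -
  obtain \<kappa> :: real where "\<And>f g. f \<in> borel_measurable M \<Longrightarrow> g \<in> borel_measurable M \<Longrightarrow>
      \<rho> (\<lambda>x. f x + g x) \<le> ennreal \<kappa> * (\<rho> f + \<rho> g)"
    using assms unfolding function_quasi_norm_def by meson
  then show ?thesis
    by (intro that[of "ennreal \<kappa>"]) auto
qed

lemma function_quasi_norm_le_three_pieces:
  assumes qn: "function_quasi_norm M \<rho>"
    and K: "\<And>g h. g \<in> borel_measurable M \<Longrightarrow> h \<in> borel_measurable M \<Longrightarrow>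
      \<rho> (\<lambda>x. g x + h x) \<le> K * (\<rho> g + \<rho> h)"
    and meas: "F \<in> borel_measurable M" "g\<^sub>1 \<in> borel_measurable M"
      "g\<^sub>2 \<in> borel_measurable M" "g\<^sub>3 \<in> borel_measurable M"
    and le: "\<And>x. x \<in> space M \<Longrightarrow> F x \<le> g\<^sub>1 x + g\<^sub>2 x + g\<^sub>3 x"
  shows "\<rho> F \<le> K * (K * (\<rho> g\<^sub>1 + \<rho> g\<^sub>2) + \<rho> g\<^sub>3)"
proof -
  have "\<rho> F \<le> \<rho> (\<lambda>x. g\<^sub>1 x + g\<^sub>2 x + g\<^sub>3 x)"
    using meas le by (intro function_quasi_norm_mono[OF qn]) auto
  also have "\<dots> \<le> K * (\<rho> (\<lambda>x. g\<^sub>1 x + g\<^sub>2 x) + \<rho> g\<^sub>3)"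
    using meas by (intro K) auto
  also have "\<dots> \<le> K * (K * (\<rho> g\<^sub>1 + \<rho> g\<^sub>2) + \<rho> g\<^sub>3)"
    using meas by (intro mult_left_mono add_right_mono K) auto
  finally show ?thesis .
qed

lemma function_quasi_norm_small_multiple_indicator:
  assumes "function_quasi_norm M \<rho>" "E \<in> sets M" "emeasure M E < \<infinity>" "0 < e"
  obtains \<delta> :: real where "0 < \<delta>" "\<rho> (\<lambda>x. ennreal \<delta> * indicator E x) < e"
proof -
  have "\<rho> (indicator E) < \<infinity>"
    using assms(1-3) by (rule function_quasi_norm_indicator_finite)
  then have "((\<lambda>\<delta>. \<rho> (indicator E) * ennreal \<delta>) \<longlongrightarrow> \<rho> (indicator E) * ennreal 0) (at_right 0)"
    by (intro ennreal_tendsto_cmult tendsto_intros) auto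
  then have "eventually (\<lambda>\<delta>. \<rho> (indicator E) * ennreal \<delta> < e) (at_right 0)"
    using \<open>0 < e\<close> by (auto dest: order_tendstoD(2))
  then obtain \<delta> :: real where "0 < \<delta>" "\<rho> (indicator E) * ennreal \<delta> < e"
    using eventually_happens'[OF trivial_limit_at_right_real
        eventually_conj[OF eventually_at_right_less]] by blast
  moreover have "\<rho> (\<lambda>x. ennreal \<delta> * indicator E x) = ennreal \<delta> * \<rho> (indicator E)"
    using assms \<open>0 < \<delta>\<close> by (intro function_quasi_norm_scale) auto
  ultimately show ?thesis
    by (intro that) (auto simp: mult.commute)
qed

lemma tendsto_zero_ennreal_multiple:
  fixes g :: "nat \<Rightarrow> ennreal"
  assumes "C < \<infinity>"
    and "\<And>e :: real. 0 < e \<Longrightarrow> eventually (\<lambda>n. g n \<le> C * ennreal e) sequentially"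
  shows "g \<longlonglongrightarrow> 0"
proof (rule tendsto_zero_ennreal)
  fix r :: real assume "0 < r"
  obtain c where C: "C = ennreal c" "0 \<le> c"
    using assms(1) by (cases C) auto
  define e where "e = r / (c + 1)"
  have "0 < e" "c * e < r"
    using \<open>0 < r\<close> \<open>0 \<le> c\<close> by (auto simp: e_def field_simps)
  then have "C * ennreal e < ennreal r"
    using C \<open>0 < r\<close> by (simp add: ennreal_mult'' [symmetric] ennreal_lessI)
  with assms(2)[OF \<open>0 < e\<close>] show "eventually (\<lambda>n. g n < ennreal r) sequentially"
    by (auto elim: eventually_mono)
qed

lemma has_absolutely_continuous_norm_exhaustion:
  assumes "has_absolutely_continuous_norm M \<rho> f"
    and "range \<Omega> \<subseteq> sets M" "incseq \<Omega>" "(\<Union>k. \<Omega> k) = space M"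
  shows "(\<lambda>k. \<rho> (\<lambda>x. f x * indicator (space M - \<Omega> k) x)) \<longlonglongrightarrow> 0"
  using assms(2-4)
  by (intro has_absolutely_continuous_normD[OF assms(1)])
     (auto simp: decseq_def incseq_def)

lemma has_absolutely_continuous_norm_superlevel:
  fixes F :: "nat \<Rightarrow> 'a \<Rightarrow> ennreal"
  assumes "has_absolutely_continuous_norm M \<rho> f"
    and meas: "\<And>n. F n \<in> borel_measurable M"
    and dec: "\<And>x. x \<in> space M \<Longrightarrow> decseq (\<lambda>n. F n x)"
    and lim: "\<And>x. x \<in> space M \<Longrightarrow> (\<lambda>n. F n x) \<longlonglongrightarrow> 0"
    and "0 < c"
  shows "(\<lambda>n. \<rho> (\<lambda>x. f x * indicator {x \<in> space M. c < F n x} x)) \<longlonglongrightarrow> 0"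
proof (rule has_absolutely_continuous_normD[OF assms(1)])
  show "{x \<in> space M. c < F n x} \<in> sets M" for n
    using meas[of n] by measurable
  show "decseq (\<lambda>n. {x \<in> space M. c < F n x})"
    using dec by (force simp: decseq_def intro: less_le_trans)
  show "(\<Inter>n. {x \<in> space M. c < F n x}) = {}"
  proof (intro equals0I)
    fix x assume x: "x \<in> (\<Inter>n. {x \<in> space M. c < F n x})"
    then have "eventually (\<lambda>n. F n x < c) sequentially"
      using lim[of x] \<open>0 < c\<close> by (intro order_tendstoD(2)) auto
    then obtain n where "F n x < c"
      by (auto simp: eventually_sequentially)
    with x show False
      using less_asym by blast
  qed
qed

lemma ennreal_le_truncation_split:
  fixes F f :: "'a \<Rightarrow> ennreal"
  assumes "F x \<le> f x" "x \<in> S"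
  shows "F x \<le> d * indicator E x + f x * indicator {y \<in> S. d < F y} x + f x * indicator (S - E) x"
  using assms by (cases "d < F x") (auto split: split_indicator intro: add_increasing)

lemma tendsto_zero_if_has_absolutely_continuous_norm:
  fixes F :: "nat \<Rightarrow> 'a \<Rightarrow> ennreal"
  assumes "sigma_finite_measure M" and qn: "function_quasi_norm M \<rho>"
    and f: "f \<in> borel_measurable M" and acn: "has_absolutely_continuous_norm M \<rho> f"
    and meas: "\<And>n. F n \<in> borel_measurable M"
    and dec: "\<And>x. x \<in> space M \<Longrightarrow> decseq (\<lambda>n. F n x)"
    and bound: "\<And>x. x \<in> space M \<Longrightarrow> F 0 x \<le> f x"
    and lim: "\<And>x. x \<in> space M \<Longrightarrow> (\<lambda>n. F n x) \<longlonglongrightarrow> 0"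
  shows "(\<lambda>n. \<rho> (F n)) \<longlonglongrightarrow> 0"
proof -
  obtain K where "K < \<infinity>" and K: "\<And>g h. g \<in> borel_measurable M \<Longrightarrow> h \<in> borel_measurable M \<Longrightarrow>
      \<rho> (\<lambda>x. g x + h x) \<le> K * (\<rho> g + \<rho> h)"
    using function_quasi_norm_triangle[OF qn] by blast
  obtain \<Omega> where \<Omega>: "range \<Omega> \<subseteq> sets M" "(\<Union>k. \<Omega> k) = space M"
      "\<And>k. emeasure M (\<Omega> k) \<noteq> \<infinity>" "incseq \<Omega>"
    using sigma_finite_measure.sigma_finite_incseq[OF assms(1)] by blast
  show ?thesis
  proof (rule tendsto_zero_ennreal_multiple)
    show "K * (2 * K + 1) < \<infinity>"
      using \<open>K < \<infinity>\<close> by (simp add: ennreal_mult_less_top)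
    fix e :: real assume "0 < e"
    have "eventually (\<lambda>k. \<rho> (\<lambda>x. f x * indicator (space M - \<Omega> k) x) < ennreal e) sequentially"
      using has_absolutely_continuous_norm_exhaustion[OF acn \<Omega>(1,4,2)] \<open>0 < e\<close>
      by (intro order_tendstoD(2)) auto
    then obtain k where k: "\<rho> (\<lambda>x. f x * indicator (space M - \<Omega> k) x) < ennreal e"
      using eventually_happens'[OF trivial_limit_sequentially] by blast
    obtain \<delta> where "0 < \<delta>" and \<delta>: "\<rho> (\<lambda>x. ennreal \<delta> * indicator (\<Omega> k) x) < ennreal e"
      using function_quasi_norm_small_multiple_indicator[OF qn, of "\<Omega> k" "ennreal e"] \<Omega> \<open>0 < e\<close>
      by (auto simp: less_top)
    define D where "D n = {x \<in> space M. ennreal \<delta> < F n x}" for n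
    have "(\<lambda>n. \<rho> (\<lambda>x. f x * indicator (D n) x)) \<longlonglongrightarrow> 0"
      unfolding D_def using \<open>0 < \<delta>\<close>
      by (intro has_absolutely_continuous_norm_superlevel[OF acn meas dec lim]) auto
    then have "eventually (\<lambda>n. \<rho> (\<lambda>x. f x * indicator (D n) x) < ennreal e) sequentially"
      using \<open>0 < e\<close> by (intro order_tendstoD(2)) auto
    then show "eventually (\<lambda>n. \<rho> (F n) \<le> K * (2 * K + 1) * ennreal e) sequentially"
    proof eventually_elim
      case (elim n)
      have [measurable]: "D n \<in> sets M" "\<Omega> k \<in> sets M"
        unfolding D_def using meas[of n] \<Omega>(1) by measurable
      note [measurable] = f
      have "F n x \<le> f x" if "x \<in> space M" for x
        using dec[OF that] bound[OF that] by (metis decseq_def le0 order_trans)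
      then have split: "F n x \<le> ennreal \<delta> * indicator (\<Omega> k) x + f x * indicator (D n) x
          + f x * indicator (space M - \<Omega> k) x" if "x \<in> space M" for x
        using that unfolding D_def by (intro ennreal_le_truncation_split)
      have "\<rho> (F n) \<le> K * (K * (\<rho> (\<lambda>x. ennreal \<delta> * indicator (\<Omega> k) x)
          + \<rho> (\<lambda>x. f x * indicator (D n) x)) + \<rho> (\<lambda>x. f x * indicator (space M - \<Omega> k) x))"
        by (rule function_quasi_norm_le_three_pieces[OF qn K meas _ _ _ split]; measurable)
      also have "\<dots> \<le> K * (K * (ennreal e + ennreal e) + ennreal e)"
        using \<delta> elim k by (intro mult_left_mono add_mono) auto
      also have "\<dots> = K * (2 * K + 1) * ennreal e"
        by (simp only: mult_2 distrib_left distrib_right mult_1 mult.assoc)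
      finally show ?case .
    qed
  qed
qed

lemma dominating_imp_has_absolutely_continuous_norm:
  assumes "dominating M \<rho> f" "f \<in> borel_measurable M"
  shows "has_absolutely_continuous_norm M \<rho> f"
  unfolding has_absolutely_continuous_norm_def
proof (intro allI impI)
  fix A :: "nat \<Rightarrow> 'a set"
  assume A: "\<forall>n. A n \<in> sets M" "decseq A" "(\<Inter>n. A n) = {}"
  define F where "F = (\<lambda>n x. f x * indicator (A n) x)"
  have "F (Suc n) x \<le> F n x" for n x
    using decseq_SucD[OF A(2)] by (auto simp: F_def split: split_indicator)
  moreover have "(\<lambda>n. F n x) \<longlonglongrightarrow> 0" for x
  proof -
    obtain n where "x \<notin> A n"
      using A(3) by auto
    then have "\<forall>m\<ge>n. F m x = 0"
      using A(2) by (auto simp: F_def decseq_def split: split_indicator)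
    then have "eventually (\<lambda>m. F m x = 0) sequentially"
      unfolding eventually_sequentially by blast
    then show ?thesis
      by (rule tendsto_eventually)
  qed
  moreover have "F n \<in> borel_measurable M" "F 0 x \<le> f x" for n x
    using A(1) assms(2) by (auto simp: F_def split: split_indicator)
  ultimately show "(\<lambda>n. \<rho> (\<lambda>x. f x * indicator (A n) x)) \<longlonglongrightarrow> 0"
    using assms(1) unfolding dominating_def F_def by simp
qed

lemma dominatingI:
  fixes f :: "'a \<Rightarrow> ennreal"
  assumes qn: "function_quasi_norm M \<rho>" and "\<rho> f < \<infinity>"
    and everywhere: "\<And>F. (\<And>n. F n \<in> borel_measurable M) \<Longrightarrow>
      (\<And>x. x \<in> space M \<Longrightarrow> decseq (\<lambda>n. F n x)) \<Longrightarrow>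
      (\<And>x. x \<in> space M \<Longrightarrow> F 0 x \<le> f x) \<Longrightarrow>
      (\<And>x. x \<in> space M \<Longrightarrow> (\<lambda>n. F n x) \<longlonglongrightarrow> 0) \<Longrightarrow> (\<lambda>n. \<rho> (F n)) \<longlonglongrightarrow> 0"
  shows "dominating M \<rho> f"
  unfolding dominating_def
proof (intro conjI allI impI)
  show "\<rho> f < \<infinity>" by fact
  fix F :: "nat \<Rightarrow> 'a \<Rightarrow> ennreal"
  assume meas: "\<forall>n. F n \<in> borel_measurable M"
    and "\<forall>n. AE x in M. F (Suc n) x \<le> F n x" "AE x in M. F 0 x \<le> f x"
    and "AE x in M. (\<lambda>n. F n x) \<longlonglongrightarrow> 0"
  then have "AE x in M. decseq (\<lambda>n. F n x) \<and> F 0 x \<le> f x \<and> (\<lambda>n. F n x) \<longlonglongrightarrow> 0"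
    by (simp add: AE_all_countable decseq_Suc_iff)
  then obtain N
    where good: "\<And>x. x \<in> space M - N \<Longrightarrow> decseq (\<lambda>n. F n x) \<and> F 0 x \<le> f x \<and> (\<lambda>n. F n x) \<longlonglongrightarrow> 0"
      and N: "N \<in> null_sets M"
    by (elim AE_E3) blast
  define G where "G = (\<lambda>n x. F n x * indicator (space M - N) x)"
  have G_meas: "G n \<in> borel_measurable M" for n
    using meas N unfolding G_def
    by (intro borel_measurable_times_ennreal borel_measurable_indicator) auto
  have "(\<lambda>n. \<rho> (G n)) \<longlonglongrightarrow> 0"
  proof (rule everywhere[OF G_meas])
    fix x assume "x \<in> space M"
    then show "decseq (\<lambda>n. G n x)" "G 0 x \<le> f x" "(\<lambda>n. G n x) \<longlonglongrightarrow> 0"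
      using good[of x] by (auto simp: G_def decseq_def split: split_indicator)
  qed
  moreover have "\<rho> (G n) = \<rho> (F n)" for n
    using G_meas meas by (intro function_quasi_norm_AE_cong[OF qn])
      (auto simp: G_def intro: AE_mp[OF AE_not_in[OF N]])
  ultimately show "(\<lambda>n. \<rho> (F n)) \<longlonglongrightarrow> 0"
    by simp
qed

theorem proposition3p22:
  fixes M :: "'a measure" and \<rho> :: "('a \<Rightarrow> ennreal) \<Rightarrow> ennreal" and f :: "'a \<Rightarrow> ennreal"
  assumes "sigma_finite_measure M"
    and "function_quasi_norm M \<rho>"
    and "f \<in> borel_measurable M"
    and "\<rho> f < \<infinity>"
  shows "dominating M \<rho> f \<longleftrightarrow>
    (\<forall>A :: nat \<Rightarrow> 'a set. (\<forall>n. A n \<in> sets M) \<longrightarrow> decseq A \<longrightarrow> (\<Inter>n. A n) = {} \<longrightarrow>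
       (\<lambda>n. \<rho> (\<lambda>x. f x * indicator (A n) x)) \<longlonglongrightarrow> 0)"
proof -
  have "dominating M \<rho> f \<longleftrightarrow> has_absolutely_continuous_norm M \<rho> f"
  proof
    assume "dominating M \<rho> f"
    then show "has_absolutely_continuous_norm M \<rho> f"
      using assms(3) by (rule dominating_imp_has_absolutely_continuous_norm)
  next
    assume "has_absolutely_continuous_norm M \<rho> f"
    then show "dominating M \<rho> f"
      using assms tendsto_zero_if_has_absolutely_continuous_norm by (intro dominatingI) blast+
  qed
  then show ?thesis
    unfolding has_absolutely_continuous_norm_def .
qed

end
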